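(* Let $f:\mathbb{R}^n\to\mathbb{R}$ be twice continuously differentiable with $L$-Lipschitz gradient, let $\varphi_s:\mathbb{R}^{n_s}\to\mathbb{R}$ ($s=1,\dots,p$) be twice continuously differentiable and $\mu_s$-strongly convex ($\mu_s>0$), and $\mu=\min_s\mu_s$. If $0<\alpha<\frac\mu L$, then each map $$\psi_s(x)=(I_n-U_sU_s^T)x+U_s[\nabla\varphi_s]^{-1}\big(\nabla\varphi_s(x(s))-\alpha\nabla_sf(x)\big),\qquad s=1,\dots,p,$$ is a diffeomorphism of $\mathbb{R}^n$.
   Context: $\|\nabla f(x)-\nabla f(y)\|\le L\|x-y\|$ for all $x,y$, $L>0$. The variable is partitioned as $x=(x(1),\dots,x(p))$, $x(s)\in\mathbb{R}^{n_s}$, $\sum_sn_s=n$; $U_s\in\mathbb{R}^{n\times n_s}$ is the $s$-th block-column of $I_n$ and $\nabla_sf(x)=U_s^T\nabla f(x)$. Strong convexity: $\varphi_s(y)\ge\varphi_s(x)+\langle\nabla\varphi_s(x),y-x\rangle+\frac{\mu_s}2\|y-x\|^2$; $[\nabla\varphi_s]^{-1}$ denotes the inverse of the bijection $\nabla\varphi_s:\mathbb{R}^{n_s}\to\mathbb{R}^{n_s}$. *)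

theory Defs
  imports "HOL-Analysis.Analysis"
begin

text \<open>The coordinates of R^n are indexed by the finite type 'n; the block partition is
given by blk :: 'n => nat (coordinate i belongs to block blk i).  R^{n_s} is identified
(isometrically, via coordinates) with the coordinate subspace of block s.\<close>

definition block_space :: "('n \<Rightarrow> nat) \<Rightarrow> nat \<Rightarrow> (real^'n) set" where
  "block_space blk s = {y. \<forall>i. blk i \<noteq> s \<longrightarrow> y $ i = 0}"

text \<open>block_proj blk s x = U_s U_s^T x.\<close>
definition block_proj :: "('n \<Rightarrow> nat) \<Rightarrow> nat \<Rightarrow> real^'n \<Rightarrow> real^'n" where
  "block_proj blk s x = (\<chi> i. if blk i = s then x $ i else 0)"

definition C1_on_UNIV :: "('a::euclidean_space \<Rightarrow> 'b::euclidean_space) \<Rightarrow> bool" where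
  "C1_on_UNIV g \<longleftrightarrow> (\<exists>D. (\<forall>x. (g has_derivative blinfun_apply (D x)) (at x)) \<and> continuous_on UNIV D)"

definition is_diffeo :: "('a::euclidean_space \<Rightarrow> 'a) \<Rightarrow> bool" where
  "is_diffeo g \<longleftrightarrow> bij g \<and> C1_on_UNIV g \<and> C1_on_UNIV (inv g)"

end

theory Submission
  imports Defs
begin

text \<open>Let \<open>P\<close> project onto block \<open>s\<close>, let \<open>g = \<nabla>\<phi>\<^sub>s\<close> and
  \<open>F\<^sub>c x = (x - P x) + g (P x) - c P (\<nabla>f x)\<close> (\<open>block_map\<close> below). Then
  \<open>\<psi>\<^sub>s = F\<^sub>0\<^sup>-\<^sup>1 \<circ> F\<^sub>\<alpha>\<close>, so it suffices that every \<open>F\<^sub>c\<close> with \<open>0 \<le> c\<close> and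
  \<open>c L < \<mu>\<^sub>s\<close> is a diffeomorphism. In the block direction the strong monotonicity of \<open>g\<close>
  beats the \<open>c L\<close>-Lipschitz perturbation, so \<open>F\<^sub>c\<close> expands distances by a uniform
  factor. A \<open>C\<^sup>1\<close> self-map of \<open>\<real>\<^sup>n\<close> with this property is a diffeomorphism: it is
  injective, its range is open by invariance of domain and closed by completeness, and its
  derivatives are uniformly bounded below, so their inverses depend continuously on the point.\<close>

lemma strongly_convex_imp_strongly_monotone:
  fixes \<phi> :: "'a::real_inner \<Rightarrow> real"
  assumes sc: "\<And>x y. x \<in> S \<Longrightarrow> y \<in> S \<Longrightarrow> \<phi> y \<ge> \<phi> x + g x \<bullet> (y - x) + \<mu> / 2 * (norm (y - x))\<^sup>2"
    and "x \<in> S" "y \<in> S"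
  shows "\<mu> * (norm (x - y))\<^sup>2 \<le> (g x - g y) \<bullet> (x - y)"
proof -
  have "g x \<bullet> (y - x) = - (g x \<bullet> (x - y))" by (simp add: inner_diff_right)
  moreover have "norm (y - x) = norm (x - y)" by (rule norm_minus_commute)
  ultimately show ?thesis
    using sc[of x y] sc[of y x] assms(2,3) by (simp add: inner_diff_left)
qed


subsection \<open>Expanding maps\<close>

lemma inj_expanding:
  assumes m: "m > 0" and K: "\<And>x y. m * norm (x - y) \<le> norm (K x - K y)"
  shows "inj K"
proof (rule injI)
  fix x y assume "K x = K y"
  then have "m * norm (x - y) \<le> 0" using K[of x y] by simp
  then show "x = y" using m by (simp add: mult_le_0_iff)
qed

lemma closed_range_expanding:
  fixes K :: "'a::euclidean_space \<Rightarrow> 'b::euclidean_space"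
  assumes cont: "continuous_on UNIV K" and m: "m > 0"
    and K: "\<And>x y. m * norm (x - y) \<le> norm (K x - K y)"
  shows "closed (range K)"
  unfolding closed_sequential_limits
proof (intro allI impI, elim conjE)
  fix ys l assume ys: "\<forall>n. ys n \<in> range K" and lim: "ys \<longlonglongrightarrow> l"
  have "\<forall>n. \<exists>x. ys n = K x" using ys by blast
  then obtain z where z: "\<And>n. ys n = K (z n)" by metis
  have "(1 / m)-lipschitz_on (range K) (inv K)"
  proof (rule lipschitz_onI)
    fix u v assume "u \<in> range K" "v \<in> range K"
    with K[of "inv K u" "inv K v"] m show "dist (inv K u) (inv K v) \<le> 1 / m * dist u v"
      by (auto simp: f_inv_into_f dist_norm field_simps)
  qed (use m in simp)
  then have "Cauchy (inv K \<circ> ys)"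
    using uniformly_continuous_imp_Cauchy_continuous[OF lipschitz_on_uniformly_continuous]
      LIMSEQ_imp_Cauchy[OF lim] ys
    unfolding Cauchy_continuous_on_def by blast
  moreover have "inv K \<circ> ys = z"
    using inj_expanding[OF m K] z by (simp add: o_def)
  ultimately obtain z0 where "z \<longlonglongrightarrow> z0" using Cauchy_convergent_iff convergent_def by metis
  then have "(\<lambda>n. K (z n)) \<longlonglongrightarrow> K z0" by (rule continuous_on_tendsto_compose[OF cont]) auto
  then have "ys \<longlonglongrightarrow> K z0" unfolding z[symmetric] .
  then show "l \<in> range K" using LIMSEQ_unique[OF lim] by simp
qed

lemma bij_expanding:
  fixes K :: "'a::euclidean_space \<Rightarrow> 'a"
  assumes cont: "continuous_on UNIV K" and m: "m > 0"
    and K: "\<And>x y. m * norm (x - y) \<le> norm (K x - K y)"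
  shows "bij K"
proof -
  have "open (range K)"
    using invariance_of_domain[OF cont open_UNIV inj_expanding[OF m K]] .
  moreover have "closed (range K)" by (rule closed_range_expanding[OF cont m K])
  ultimately have "surj K" using clopen by blast
  then show ?thesis using inj_expanding[OF m K] by (simp add: bij_def)
qed

lemma expanding_imp_derivative_bounded_below:
  fixes K :: "'a::euclidean_space \<Rightarrow> 'b::euclidean_space"
  assumes D: "(K has_derivative D) (at x)" and m: "m > 0"
    and K: "\<And>y. m * norm (y - x) \<le> norm (K y - K x)"
  shows "m * norm w \<le> norm (D w)"
proof (rule ccontr)
  assume "\<not> ?thesis"
  then have lt: "norm (D w) < m * norm w" by simp
  have lin: "linear D" using D has_derivative_linear by blast
  then have "w \<noteq> 0" using lt by (auto simp: linear_0)
  then have nw: "norm w > 0" by simp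
  define e where "e = (m * norm w - norm (D w)) / (2 * norm w)"
  have e: "e > 0" using lt nw by (simp add: e_def)
  obtain d where d: "d > 0" and dd: "\<And>y. norm (y - x) < d \<Longrightarrow>
      norm (K y - K x - D (y - x)) \<le> e * norm (y - x)"
    using D e unfolding has_derivative_at_alt by blast
  define t where "t = d / (2 * norm w)"
  have t: "t > 0" "t * norm w < d" using d nw by (simp_all add: t_def)
  let ?y = "x + t *\<^sub>R w"
  have "m * (t * norm w) \<le> norm (K ?y - K x)" using K[of ?y] t by simp
  also have "\<dots> \<le> norm (K ?y - K x - D (?y - x)) + norm (D (?y - x))"
    by (metis diff_add_cancel norm_triangle_ineq)
  also have "\<dots> \<le> e * (t * norm w) + t * norm (D w)"
    using dd[of ?y] t by (simp add: linear_scale[OF lin])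
  finally have "t * (m * norm w) \<le> t * (e * norm w + norm (D w))"
    by (simp add: algebra_simps)
  then have "m * norm w \<le> e * norm w + norm (D w)" using t by simp
  moreover have "e * norm w = (m * norm w - norm (D w)) / 2" using nw by (simp add: e_def)
  ultimately show False using lt by (simp add: field_simps)
qed

subsection \<open>Linear operators bounded below\<close>

definition inv_blinfun :: "('a::euclidean_space \<Rightarrow>\<^sub>L 'a) \<Rightarrow> 'a \<Rightarrow>\<^sub>L 'a" where
  "inv_blinfun A = Blinfun (inv (blinfun_apply A))"

lemma inv_blinfun_bounded_below:
  fixes A :: "'a::euclidean_space \<Rightarrow>\<^sub>L 'a"
  assumes m: "m > 0" and A: "\<And>w. m * norm w \<le> norm (A w)"
  shows "\<And>z. A (inv_blinfun A z) = z" and "\<And>w. inv_blinfun A (A w) = w"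
    and "\<And>z. m * norm (inv_blinfun A z) \<le> norm z"
proof -
  have inj: "inj (blinfun_apply A)"
    by (rule inj_expanding[OF m]) (metis A blinfun.diff_right)
  have surj: "surj (blinfun_apply A)"
    using linear_injective_imp_surjective[OF bounded_linear.linear[OF blinfun.bounded_linear_right] inj]
    by simp
  have apply_eq: "blinfun_apply (inv_blinfun A) = inv (blinfun_apply A)"
    unfolding inv_blinfun_def
    by (rule bounded_linear_Blinfun_apply[OF inj_linear_imp_inv_bounded_linear[OF blinfun.bounded_linear_right inj]])
  show right: "\<And>z. A (inv_blinfun A z) = z" using surj by (simp add: apply_eq surj_f_inv_f)
  show "\<And>w. inv_blinfun A (A w) = w" using inj by (simp add: apply_eq)
  show "\<And>z. m * norm (inv_blinfun A z) \<le> norm z" using A right by metis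
qed

lemma norm_inv_blinfun_diff_le:
  fixes A B :: "'a::euclidean_space \<Rightarrow>\<^sub>L 'a"
  assumes m: "m > 0" and A: "\<And>w. m * norm w \<le> norm (A w)" and B: "\<And>w. m * norm w \<le> norm (B w)"
  shows "norm (inv_blinfun A - inv_blinfun B) \<le> norm (A - B) / m\<^sup>2"
proof (rule norm_blinfun_bound)
  fix w
  let ?u = "inv_blinfun B w"
  note invA = inv_blinfun_bounded_below[OF m A] and invB = inv_blinfun_bounded_below[OF m B]
  \<comment> \<open>\<open>A\<^sup>-\<^sup>1 - B\<^sup>-\<^sup>1 = A\<^sup>-\<^sup>1 (B - A) B\<^sup>-\<^sup>1\<close>\<close>
  have "inv_blinfun A w - ?u = inv_blinfun A ((B - A) ?u)"
    using invA(2)[of ?u] invB(1)[of w] by (simp add: blinfun.diff_left blinfun.diff_right)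
  then have "m * norm ((inv_blinfun A - inv_blinfun B) w) \<le> norm ((B - A) ?u)"
    using invA(3) by (metis blinfun.diff_left)
  also have "\<dots> \<le> norm (A - B) * norm ?u"
    by (metis norm_blinfun norm_minus_commute)
  finally have "m * (m * norm ((inv_blinfun A - inv_blinfun B) w)) \<le> norm (A - B) * (m * norm ?u)"
    using m by (simp add: algebra_simps)
  also have "\<dots> \<le> norm (A - B) * norm w"
    by (rule mult_left_mono[OF invB(3) norm_ge_zero])
  finally show "norm ((inv_blinfun A - inv_blinfun B) w) \<le> norm (A - B) / m\<^sup>2 * norm w"
    using m by (simp add: field_simps power2_eq_square)
qed simp

lemma continuous_on_inv_blinfun:
  fixes D :: "'b::topological_space \<Rightarrow> 'a::euclidean_space \<Rightarrow>\<^sub>L 'a"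
  assumes "continuous_on S D" and m: "m > 0" and D: "\<And>x w. x \<in> S \<Longrightarrow> m * norm w \<le> norm (D x w)"
  shows "continuous_on S (\<lambda>x. inv_blinfun (D x))"
proof -
  let ?B = "{A. \<forall>w. m * norm w \<le> norm (blinfun_apply A w)}"
  have "(1 / m\<^sup>2)-lipschitz_on ?B inv_blinfun"
    by (rule lipschitz_onI) (use norm_inv_blinfun_diff_le[OF m] in \<open>auto simp: dist_norm\<close>)
  then show ?thesis
    using assms(1) D by (auto intro: continuous_on_compose2 lipschitz_on_continuous_on)
qed


subsection \<open>Diffeomorphisms\<close>

lemma is_diffeo_expanding:
  fixes K :: "'a::euclidean_space \<Rightarrow> 'a"
  assumes D: "\<And>x. (K has_derivative blinfun_apply (D x)) (at x)" and cD: "continuous_on UNIV D"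
    and m: "m > 0" and K: "\<And>x y. m * norm (x - y) \<le> norm (K x - K y)"
  shows "is_diffeo K"
proof -
  have cont: "continuous_on UNIV K"
    using D has_derivative_continuous continuous_at_imp_continuous_on by blast
  have bij: "bij K" by (rule bij_expanding[OF cont m K])
  define G where "G = inv K"
  have KG: "K (G y) = y" for y unfolding G_def by (rule surj_f_inv_f[OF bij_is_surj[OF bij]])
  have GK: "G (K x) = x" for x unfolding G_def by (rule inv_f_f[OF bij_is_inj[OF bij]])
  have D_below: "m * norm w \<le> norm (D x w)" for x w
    by (rule expanding_imp_derivative_bounded_below[OF D m]) (use K in auto)
  have "(1 / m)-lipschitz_on UNIV G"
  proof (rule lipschitz_onI)
    show "dist (G y) (G z) \<le> 1 / m * dist y z" for y z
      using K[of "G y" "G z"] m by (simp add: KG dist_norm field_simps)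
  qed (use m in simp)
  then have cG: "continuous_on UNIV G" by (rule lipschitz_on_continuous_on)
  have "(G has_derivative blinfun_apply (inv_blinfun (D (G y)))) (at (K (G y)))" for y
    by (rule has_derivative_inverse_on[OF open_UNIV D, where g'="\<lambda>x. inv_blinfun (D x)"])
      (auto simp: GK fun_eq_iff inv_blinfun_bounded_below(1)[OF m D_below])
  then have "(G has_derivative blinfun_apply (inv_blinfun (D (G y)))) (at y)" for y
    by (simp only: KG)
  moreover have "continuous_on UNIV (\<lambda>y. inv_blinfun (D (G y)))"
    by (rule continuous_on_inv_blinfun[OF continuous_on_compose2[OF cD cG] m D_below]) auto
  ultimately have "C1_on_UNIV G"
    unfolding C1_on_UNIV_def by (intro exI[of _ "\<lambda>y. inv_blinfun (D (G y))"]) simp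
  moreover have "C1_on_UNIV K" unfolding C1_on_UNIV_def using D cD by blast
  ultimately show ?thesis unfolding is_diffeo_def G_def using bij by blast
qed

lemma C1_on_UNIV_compose:
  fixes F :: "'b::euclidean_space \<Rightarrow> 'c::euclidean_space" and G :: "'a::euclidean_space \<Rightarrow> 'b"
  assumes "C1_on_UNIV F" "C1_on_UNIV G"
  shows "C1_on_UNIV (F \<circ> G)"
proof -
  obtain DF where DF: "\<And>x. (F has_derivative blinfun_apply (DF x)) (at x)" "continuous_on UNIV DF"
    using assms(1) unfolding C1_on_UNIV_def by blast
  obtain DG where DG: "\<And>x. (G has_derivative blinfun_apply (DG x)) (at x)" "continuous_on UNIV DG"
    using assms(2) unfolding C1_on_UNIV_def by blast
  have cG: "continuous_on UNIV G"
    using DG(1) has_derivative_continuous continuous_at_imp_continuous_on by blast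
  have "(F \<circ> G has_derivative blinfun_apply (DF (G x) o\<^sub>L DG x)) (at x)" for x
    using has_derivative_compose[OF DG(1) DF(1)] by (simp add: o_def blinfun_compose.rep_eq)
  moreover have "continuous_on UNIV (\<lambda>x. DF (G x) o\<^sub>L DG x)"
    by (intro continuous_intros continuous_on_compose2[OF DF(2) cG] DG(2)) auto
  ultimately show ?thesis unfolding C1_on_UNIV_def by (intro exI[of _ "\<lambda>x. DF (G x) o\<^sub>L DG x"]) simp
qed

lemma is_diffeo_compose:
  fixes F G :: "'a::euclidean_space \<Rightarrow> 'a"
  assumes "is_diffeo F" "is_diffeo G"
  shows "is_diffeo (F \<circ> G)"
  using assms unfolding is_diffeo_def by (simp add: bij_comp o_inv_distrib C1_on_UNIV_compose)

lemma is_diffeo_inv: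
  fixes F :: "'a::euclidean_space \<Rightarrow> 'a"
  assumes "is_diffeo F"
  shows "is_diffeo (inv F)"
  using assms unfolding is_diffeo_def by (simp add: bij_imp_bij_inv inv_inv_eq)


subsection \<open>Block coordinates\<close>

lemma linear_block_proj: "linear (block_proj blk s)"
  by (rule linearI) (auto simp: block_proj_def vec_eq_iff)

lemma block_proj_in_block_space: "block_proj blk s x \<in> block_space blk s"
  by (simp add: block_proj_def block_space_def)

lemma block_proj_eq_self: "x \<in> block_space blk s \<Longrightarrow> block_proj blk s x = x"
  by (auto simp: block_proj_def block_space_def vec_eq_iff)

lemma block_proj_idem: "block_proj blk s (block_proj blk s x) = block_proj blk s x"
  by (rule block_proj_eq_self[OF block_proj_in_block_space])

lemma subspace_block_space: "subspace (block_space blk s)"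
  by (auto simp: subspace_def block_space_def)

lemma orthogonal_block_space_block_proj_complement:
  "u \<in> block_space blk s \<Longrightarrow> orthogonal u (x - block_proj blk s x)"
  by (auto simp: orthogonal_def inner_vec_def block_space_def block_proj_def intro!: sum.neutral)

lemma norm_block_proj_Pythagorean:
  "(norm x)\<^sup>2 = (norm (block_proj blk s x))\<^sup>2 + (norm (x - block_proj blk s x))\<^sup>2"
  using norm_add_Pythagorean[OF orthogonal_block_space_block_proj_complement[OF
      block_proj_in_block_space, of blk s x x]]
  by simp

lemma norm_block_proj_le: "norm (block_proj blk s x) \<le> norm x"
  by (rule power2_le_imp_le[OF _ norm_ge_zero]) (use norm_block_proj_Pythagorean[of x blk s] in simp)

lemma norm_block_proj_complement_le: "norm (x - block_proj blk s x) \<le> norm x"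
  by (rule power2_le_imp_le[OF _ norm_ge_zero]) (use norm_block_proj_Pythagorean[of x blk s] in simp)

definition block_map ::
  "('n \<Rightarrow> nat) \<Rightarrow> nat \<Rightarrow> (real^'n \<Rightarrow> real^'n) \<Rightarrow> (real^'n \<Rightarrow> real^'n) \<Rightarrow> real \<Rightarrow> real^'n \<Rightarrow> real^'n"
  where "block_map blk s g h c x =
    (x - block_proj blk s x) + g (block_proj blk s x) - c *\<^sub>R block_proj blk s (h x)"

lemma block_proj_block_map:
  assumes "g ` block_space blk s \<subseteq> block_space blk s"
  shows "block_proj blk s (block_map blk s g h c x)
    = g (block_proj blk s x) - c *\<^sub>R block_proj blk s (h x)"
  using block_proj_eq_self[OF subsetD[OF assms imageI[OF block_proj_in_block_space]]]
  by (simp add: block_map_def linear_add[OF linear_block_proj] linear_diff[OF linear_block_proj]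
      linear_scale[OF linear_block_proj] block_proj_idem)

lemma block_map_minus_block_proj:
  assumes "g ` block_space blk s \<subseteq> block_space blk s"
  shows "block_map blk s g h c x - block_proj blk s (block_map blk s g h c x)
    = x - block_proj blk s x"
  by (simp add: block_proj_block_map[OF assms]) (simp add: block_map_def)

lemma strongly_monotone_block_estimate:
  fixes g h :: "real^'n \<Rightarrow> real^'n"
  assumes mono: "\<And>u v. u \<in> block_space blk s \<Longrightarrow> v \<in> block_space blk s \<Longrightarrow>
        \<mu> * (norm (u - v))\<^sup>2 \<le> (g u - g v) \<bullet> (u - v)"
    and h: "\<And>x y. norm (h x - h y) \<le> L * norm (x - y)"
    and c: "0 \<le> c" and L: "0 \<le> L"
  shows "(\<mu> - c * L) * norm (block_proj blk s x - block_proj blk s y)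
    \<le> norm ((g (block_proj blk s x) - c *\<^sub>R block_proj blk s (h x))
          - (g (block_proj blk s y) - c *\<^sub>R block_proj blk s (h y)))
      + c * L * norm ((x - block_proj blk s x) - (y - block_proj blk s y))"
proof -
  let ?P = "block_proj blk s"
  define a where "a = (x - ?P x) - (y - ?P y)"
  define b where "b = ?P x - ?P y"
  define w where "w = (g (?P x) - c *\<^sub>R ?P (h x)) - (g (?P y) - c *\<^sub>R ?P (h y))"
  have xy: "norm (x - y) \<le> norm a + norm b"
    using norm_triangle_ineq[of a b] by (simp add: a_def b_def)
  have "\<mu> * (norm b)\<^sup>2 \<le> (g (?P x) - g (?P y)) \<bullet> b"
    unfolding b_def by (rule mono[OF block_proj_in_block_space block_proj_in_block_space])
  moreover have "c * ((?P (h x) - ?P (h y)) \<bullet> b) \<le> c * (L * norm (x - y) * norm b)"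
  proof (rule mult_left_mono[OF _ c])
    have "(?P (h x) - ?P (h y)) \<bullet> b \<le> norm (?P (h x - h y)) * norm b"
      using norm_cauchy_schwarz by (simp add: linear_diff[OF linear_block_proj])
    also have "\<dots> \<le> norm (h x - h y) * norm b"
      by (rule mult_right_mono[OF norm_block_proj_le norm_ge_zero])
    also have "\<dots> \<le> L * norm (x - y) * norm b" by (rule mult_right_mono[OF h norm_ge_zero])
    finally show "(?P (h x) - ?P (h y)) \<bullet> b \<le> L * norm (x - y) * norm b" .
  qed
  moreover have "w \<bullet> b = (g (?P x) - g (?P y)) \<bullet> b - c * ((?P (h x) - ?P (h y)) \<bullet> b)"
    by (simp add: w_def inner_diff_left algebra_simps)
  ultimately have "\<mu> * (norm b)\<^sup>2 - c * L * norm (x - y) * norm b \<le> w \<bullet> b" by simp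
  also have "\<dots> \<le> norm w * norm b" by (rule norm_cauchy_schwarz)
  moreover have "c * L * norm (x - y) * norm b \<le> c * L * (norm a + norm b) * norm b"
    using c L by (intro mult_right_mono mult_left_mono xy) auto
  ultimately have "norm b * ((\<mu> - c * L) * norm b) \<le> norm b * (norm w + c * L * norm a)"
    by (simp add: power2_eq_square algebra_simps)
  moreover have "norm b > 0" if "norm b \<noteq> 0" using that by simp
  ultimately have "(\<mu> - c * L) * norm b \<le> norm w + c * L * norm a"
    using c L by (cases "norm b = 0") (simp_all add: mult_le_cancel_left_pos)
  then show ?thesis by (simp add: a_def b_def w_def)
qed

lemma block_map_expanding:
  fixes g h :: "real^'n \<Rightarrow> real^'n"
  assumes gV: "g ` block_space blk s \<subseteq> block_space blk s"
    and mono: "\<And>u v. u \<in> block_space blk s \<Longrightarrow> v \<in> block_space blk s \<Longrightarrow>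
        \<mu> * (norm (u - v))\<^sup>2 \<le> (g u - g v) \<bullet> (u - v)"
    and h: "\<And>x y. norm (h x - h y) \<le> L * norm (x - y)"
    and c: "0 \<le> c" and L: "0 \<le> L" and cL: "c * L < \<mu>"
  shows "(\<mu> - c * L) / (\<mu> + 1) * norm (x - y)
    \<le> norm (block_map blk s g h c x - block_map blk s g h c y)"
proof -
  let ?P = "block_proj blk s" and ?K = "block_map blk s g h c"
  define N where "N = norm (?K x - ?K y)"
  define a where "a = (x - ?P x) - (y - ?P y)"
  define b where "b = ?P x - ?P y"
  have "?P (?K x - ?K y) = (g (?P x) - c *\<^sub>R ?P (h x)) - (g (?P y) - c *\<^sub>R ?P (h y))"
    by (simp add: linear_diff[OF linear_block_proj] block_proj_block_map[OF gV])
  then have "norm ((g (?P x) - c *\<^sub>R ?P (h x)) - (g (?P y) - c *\<^sub>R ?P (h y))) \<le> N"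
    unfolding N_def by (metis norm_block_proj_le)
  then have bN: "(\<mu> - c * L) * norm b \<le> N + c * L * norm a"
    using strongly_monotone_block_estimate[where blk = blk and s = s and x = x and y = y, OF mono h c L] unfolding a_def b_def by linarith
  have "(?K x - ?K y) - ?P (?K x - ?K y) = (?K x - ?P (?K x)) - (?K y - ?P (?K y))"
    unfolding linear_diff[OF linear_block_proj] by (simp add: algebra_simps)
  also have "\<dots> = a" unfolding a_def block_map_minus_block_proj[OF gV] ..
  finally have aN: "norm a \<le> N" unfolding N_def by (metis norm_block_proj_complement_le)
  have "norm (x - y) \<le> norm a + norm b"
    using norm_triangle_ineq[of a b] by (simp add: a_def b_def)
  then have "(\<mu> - c * L) * norm (x - y) \<le> (\<mu> - c * L) * (norm a + norm b)"
    by (rule mult_left_mono) (use cL in simp)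
  also have "\<dots> \<le> (\<mu> - c * L) * N + (N + c * L * N)"
  proof -
    have "(\<mu> - c * L) * norm a \<le> (\<mu> - c * L) * N" by (rule mult_left_mono[OF aN]) (use cL in simp)
    moreover have "c * L * norm a \<le> c * L * N" by (rule mult_left_mono[OF aN]) (use c L in simp)
    ultimately show ?thesis unfolding distrib_left using bN by linarith
  qed
  also have "\<dots> = (\<mu> + 1) * N" by (simp add: algebra_simps)
  finally have "(\<mu> - c * L) * norm (x - y) \<le> (\<mu> + 1) * N" .
  moreover have "0 < \<mu> + 1" using cL mult_nonneg_nonneg[OF c L] by linarith
  ultimately show ?thesis by (simp add: N_def field_simps)
qed

lemma C1_on_UNIV_block_map:
  fixes g h :: "real^'n \<Rightarrow> real^'n"
  assumes g_deriv: "\<And>u. u \<in> block_space blk s \<Longrightarrow>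
        (g has_derivative blinfun_apply (H u)) (at u within block_space blk s)"
    and H: "continuous_on (block_space blk s) H"
    and h_C1: "C1_on_UNIV h"
  shows "C1_on_UNIV (block_map blk s g h c)"
proof -
  let ?P = "block_proj blk s"
  have P_bl: "bounded_linear ?P" using linear_block_proj linear_conv_bounded_linear by blast
  obtain Dh where Dh: "\<And>x. (h has_derivative blinfun_apply (Dh x)) (at x)" "continuous_on UNIV Dh"
    using h_C1 unfolding C1_on_UNIV_def by blast
  define Pb where "Pb = Blinfun ?P"
  have Pb: "blinfun_apply Pb = ?P" unfolding Pb_def by (rule bounded_linear_Blinfun_apply[OF P_bl])
  define DK where "DK x = (id_blinfun - Pb) + (H (?P x) o\<^sub>L Pb) - c *\<^sub>R (Pb o\<^sub>L Dh x)" for x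
  have "(block_map blk s g h c has_derivative blinfun_apply (DK x)) (at x)" for x
  proof -
    have "((\<lambda>x. g (?P x)) has_derivative (\<lambda>v. H (?P x) (?P v))) (at x)"
      using has_derivative_in_compose2[of "block_space blk s" g "\<lambda>u. blinfun_apply (H u)" ?P UNIV x ?P]
        g_deriv block_proj_in_block_space bounded_linear_imp_has_derivative[OF P_bl] by auto
    then have "(block_map blk s g h c has_derivative
        (\<lambda>v. (v - ?P v) + H (?P x) (?P v) - c *\<^sub>R ?P (Dh x v))) (at x)"
      unfolding block_map_def [abs_def]
      by (intro derivative_intros bounded_linear_imp_has_derivative[OF P_bl]
          bounded_linear.has_derivative[OF P_bl] Dh(1)) auto
    then show ?thesis
      by (rule has_derivative_eq_rhs)
        (simp add: fun_eq_iff DK_def Pb blinfun.diff_left blinfun.add_left blinfun.scaleR_left)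
  qed
  moreover have "continuous_on UNIV DK"
  proof -
    have "continuous_on UNIV (\<lambda>x. H (?P x))"
      by (rule continuous_on_compose2[OF H linear_continuous_on[OF P_bl]])
        (auto simp: block_proj_in_block_space)
    then show ?thesis unfolding DK_def using Dh(2) by (intro continuous_intros) auto
  qed
  ultimately show ?thesis unfolding C1_on_UNIV_def by blast
qed

lemma is_diffeo_block_map:
  fixes g h :: "real^'n \<Rightarrow> real^'n"
  assumes gV: "g ` block_space blk s \<subseteq> block_space blk s"
    and mono: "\<And>u v. u \<in> block_space blk s \<Longrightarrow> v \<in> block_space blk s \<Longrightarrow>
        \<mu> * (norm (u - v))\<^sup>2 \<le> (g u - g v) \<bullet> (u - v)"
    and h: "\<And>x y. norm (h x - h y) \<le> L * norm (x - y)"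
    and c: "0 \<le> c" and L: "0 \<le> L" and cL: "c * L < \<mu>"
    and g_deriv: "\<And>u. u \<in> block_space blk s \<Longrightarrow>
        (g has_derivative blinfun_apply (H u)) (at u within block_space blk s)"
    and H: "continuous_on (block_space blk s) H"
    and h_C1: "C1_on_UNIV h"
  shows "is_diffeo (block_map blk s g h c)"
proof -
  obtain D where "\<And>x. (block_map blk s g h c has_derivative blinfun_apply (D x)) (at x)"
    and "continuous_on UNIV D"
    using C1_on_UNIV_block_map[OF g_deriv H h_C1] unfolding C1_on_UNIV_def by blast
  moreover have "(\<mu> - c * L) / (\<mu> + 1) > 0"
    using cL mult_nonneg_nonneg[OF c L] by (intro divide_pos_pos) auto
  moreover note block_map_expanding[OF gV mono h c L cL]
  ultimately show ?thesis by (rule is_diffeo_expanding)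
qed

lemma block_update_eq_inv_block_map_comp:
  fixes g h :: "real^'n \<Rightarrow> real^'n"
  assumes gV: "g ` block_space blk s \<subseteq> block_space blk s"
    and bij: "bij (block_map blk s g h 0)"
  shows "(\<lambda>x. (x - block_proj blk s x) + inv_into (block_space blk s) g
            (g (block_proj blk s x) - c *\<^sub>R block_proj blk s (h x)))
    = inv (block_map blk s g h 0) \<circ> block_map blk s g h c"
proof
  fix x
  let ?P = "block_proj blk s" and ?V = "block_space blk s"
  have g_onto: "?V \<subseteq> g ` ?V"
  proof
    fix q assume q: "q \<in> ?V"
    obtain z where "block_map blk s g h 0 z = q" using bij by (metis bij_pointE)
    then have "q = g (?P z)"
      using block_proj_block_map[OF gV, of h 0 z] block_proj_eq_self[OF q] by simp
    then show "q \<in> g ` ?V" using block_proj_in_block_space by blast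
  qed
  define q where "q = g (?P x) - c *\<^sub>R ?P (h x)"
  have "g (?P x) \<in> ?V" using gV block_proj_in_block_space by blast
  then have "q \<in> ?V"
    unfolding q_def by (intro subspace_diff subspace_scale subspace_block_space block_proj_in_block_space)
  then have "q \<in> g ` ?V" using g_onto by blast
  define r where "r = inv_into ?V g q"
  have r: "r \<in> ?V" "g r = q"
    unfolding r_def by (rule inv_into_into[OF \<open>q \<in> g ` ?V\<close>], rule f_inv_into_f[OF \<open>q \<in> g ` ?V\<close>])
  have "?P ((x - ?P x) + r) = r"
    by (simp add: linear_add[OF linear_block_proj] linear_diff[OF linear_block_proj]
        block_proj_idem block_proj_eq_self[OF r(1)])
  then have "block_map blk s g h 0 ((x - ?P x) + r) = block_map blk s g h c x"
    by (simp add: block_map_def r(2) q_def)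
  then show "(x - ?P x) + inv_into ?V g (g (?P x) - c *\<^sub>R ?P (h x))
      = (inv (block_map blk s g h 0) \<circ> block_map blk s g h c) x"
    using bij by (metis bij_is_inj comp_apply inv_f_f q_def r_def)
qed

theorem lemma4:
  fixes f :: "real^'n \<Rightarrow> real" and gf :: "real^'n \<Rightarrow> real^'n"
    and blk :: "'n \<Rightarrow> nat" and p :: nat
    and phi :: "nat \<Rightarrow> real^'n \<Rightarrow> real" and gphi :: "nat \<Rightarrow> real^'n \<Rightarrow> real^'n"
    and mu :: "nat \<Rightarrow> real" and L \<alpha> :: real
  assumes p: "p \<ge> 1"
    and blk_range: "\<forall>i. blk i \<in> {1..p}"
    and blk_nonempty: "\<forall>s\<in>{1..p}. \<exists>i. blk i = s"
    and f_grad: "\<forall>x. (f has_derivative (\<lambda>h. gf x \<bullet> h)) (at x)"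
    and f_C2: "C1_on_UNIV gf"
    and L_pos: "L > 0"
    and f_Lip: "\<forall>x y. norm (gf x - gf y) \<le> L * norm (x - y)"
    and phi_grad: "\<forall>s\<in>{1..p}. \<forall>x\<in>block_space blk s.
        (phi s has_derivative (\<lambda>h. gphi s x \<bullet> h)) (at x within block_space blk s)
        \<and> gphi s x \<in> block_space blk s"
    and phi_C2: "\<forall>s\<in>{1..p}. \<exists>H. (\<forall>x\<in>block_space blk s.
        (gphi s has_derivative blinfun_apply (H x)) (at x within block_space blk s))
        \<and> continuous_on (block_space blk s) H"
    and mu_pos: "\<forall>s\<in>{1..p}. mu s > 0"
    and phi_sc: "\<forall>s\<in>{1..p}. \<forall>x\<in>block_space blk s. \<forall>y\<in>block_space blk s.
        phi s y \<ge> phi s x + gphi s x \<bullet> (y - x) + mu s / 2 * (norm (y - x))\<^sup>2"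
    and alpha_pos: "0 < \<alpha>"
    and alpha_lt: "\<alpha> < Min (mu ` {1..p}) / L"
  shows "\<forall>s\<in>{1..p}. is_diffeo (\<lambda>x. (x - block_proj blk s x)
          + inv_into (block_space blk s) (gphi s)
              (gphi s (block_proj blk s x) - \<alpha> *\<^sub>R block_proj blk s (gf x)))"
proof
  fix s assume s: "s \<in> {1..p}"
  have gV: "gphi s ` block_space blk s \<subseteq> block_space blk s"
    using phi_grad s by blast
  have mono: "\<And>u v. u \<in> block_space blk s \<Longrightarrow> v \<in> block_space blk s \<Longrightarrow>
      mu s * (norm (u - v))\<^sup>2 \<le> (gphi s u - gphi s v) \<bullet> (u - v)"
    by (rule strongly_convex_imp_strongly_monotone[where \<phi> = "phi s"]) (use phi_sc s in auto)
  obtain H where H: "\<And>u. u \<in> block_space blk s \<Longrightarrow>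
      (gphi s has_derivative blinfun_apply (H u)) (at u within block_space blk s)"
    "continuous_on (block_space blk s) H"
    using phi_C2 s by blast
  have "\<alpha> * L < mu s"
    using alpha_lt L_pos Min_le[of "mu ` {1..p}" "mu s"] s by (auto simp: pos_less_divide_eq)
  then have "is_diffeo (block_map blk s (gphi s) gf c)" if "c \<in> {0, \<alpha>}" for c
    using that mu_pos s alpha_pos L_pos f_Lip
    by (intro is_diffeo_block_map[OF gV mono _ _ _ _ H f_C2]) auto
  then have \<Gamma>: "is_diffeo (block_map blk s (gphi s) gf 0)"
    and F: "is_diffeo (block_map blk s (gphi s) gf \<alpha>)" by auto
  then have bij: "bij (block_map blk s (gphi s) gf 0)" unfolding is_diffeo_def by blast
  show "is_diffeo (\<lambda>x. (x - block_proj blk s x) + inv_into (block_space blk s) (gphi s)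
      (gphi s (block_proj blk s x) - \<alpha> *\<^sub>R block_proj blk s (gf x)))"
    unfolding block_update_eq_inv_block_map_comp[OF gV bij] by (intro is_diffeo_compose is_diffeo_inv \<Gamma> F)
qed

end
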